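(* For any real numbers $0\le q_1,q_2\le 1$ there exist a non-principal ultrafilter $\mathcal U$ on $\mathbb N$ and coprime natural numbers $2\le a_i<b_i$ ($i\in\mathbb N$) such that the ultraproduct $S=\prod_{\mathcal U}S_i$ of the semigroups $S_i=\{xa_i+yb_i:x,y\in\mathbb N\}$ is a (nontrivial) limit 2-semigroup with generators $a=[(a_i)]_{\mathcal U}$, $b=[(b_i)]_{\mathcal U}$ satisfying $r(b-\alpha(b),a)=q_1$ and $r(\beta_1,ab)=q_2$.
   Context: Each $S_i$ is an ordered monoid in the language $\{+,<,0\}$; a limit 2-semigroup is an ultraproduct $\prod_{\mathcal U}S_i$ over a non-principal ultrafilter $\mathcal U$ that is not isomorphic to a standard numerical semigroup, and its generators are $a=[(a_i)]_{\mathcal U}$, $b=[(b_i)]_{\mathcal U}$. In a standard 2-semigroup with generators $a<b$: $\alpha(b)$ is the largest multiple of $a$ that is $\le b$ (namely $\lfloor b/a\rfloor a$); $\beta_1$ is the least multiple of $b$ that is $\equiv1\pmod a$, i.e. $\beta_1=kb$ with $0\le k<a$, $kb\equiv 1 \pmod a$; $ab$ is the product. These are first-order definable uniformly, so they have interpretations in $S$ (coordinatewise). For elements $x\ge x'$ and $y>y'$ of $S$, the ratio is $r(x-x',y-y')=\sup\{p/q : p,q\in\mathbb Z_{\ge0},\ q\ne0,\ S\models p\,y+q\,x'\le q\,x+p\,y'\}$, where $p\,y$ denotes $y$ added to itself $p$ times; $r(x_0,y-y')$ abbreviates the case $x'=0$, $x=x_0$ (and similarly for $y$). Thus $r(b-\alpha(b),a)=\sup\{p/q: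 S\models p a+q\alpha(b)\le qb\}$ and $r(\beta_1,ab)=\sup\{p/q: S\models p\,ab\le q\beta_1\}$. *)

theory Defs
  imports Complex_Main
begin

definition ultrafilter_on_nat :: "nat set set \<Rightarrow> bool" where
  "ultrafilter_on_nat U \<longleftrightarrow>
     UNIV \<in> U \<and> {} \<notin> U \<and>
     (\<forall>A B. A \<in> U \<and> B \<in> U \<longrightarrow> A \<inter> B \<in> U) \<and>
     (\<forall>A B. A \<in> U \<and> A \<subseteq> B \<longrightarrow> B \<in> U) \<and>
     (\<forall>A. A \<in> U \<or> - A \<in> U)"

definition nonprincipal :: "nat set set \<Rightarrow> bool" where
  "nonprincipal U \<longleftrightarrow> (\<forall>n. {n} \<notin> U)"

definition U_ae :: "nat set set \<Rightarrow> (nat \<Rightarrow> bool) \<Rightarrow> bool" where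
  "U_ae U P \<longleftrightarrow> {i. P i} \<in> U"

definition sgp2 :: "nat \<Rightarrow> nat \<Rightarrow> nat set" where
  "sgp2 a b = {x * a + y * b | x y. True}"

definition alpha_fn :: "nat \<Rightarrow> nat \<Rightarrow> nat" where
  "alpha_fn a b = (b div a) * a"

definition beta1_fn :: "nat \<Rightarrow> nat \<Rightarrow> nat" where
  "beta1_fn a b = (LEAST k. k < a \<and> (k * b) mod a = 1 mod a) * b"

(* Elements of the ultraproduct are represented by sequences f with f i \<in> S_i;
   two represent the same element iff they agree U-almost everywhere; + and 0 are
   coordinatewise and x \<le> y holds in S iff it holds U-almost everywhere. *)
definition ultra_carrier :: "(nat \<Rightarrow> nat set) \<Rightarrow> (nat \<Rightarrow> nat) set" where
  "ultra_carrier S = {f. \<forall>i. f i \<in> S i}"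

(* ratio r(x - x', y - y') computed in the ultraproduct, via representatives *)
definition ultra_ratio :: "nat set set \<Rightarrow> (nat \<Rightarrow> nat) \<Rightarrow> (nat \<Rightarrow> nat) \<Rightarrow>
                           (nat \<Rightarrow> nat) \<Rightarrow> (nat \<Rightarrow> nat) \<Rightarrow> real" where
  "ultra_ratio U x x' y y' =
     Sup {real p / real q | p q. q \<noteq> 0 \<and>
            U_ae U (\<lambda>i. p * y i + q * x' i \<le> q * x i + p * y' i)}"

definition numerical_semigroup :: "nat set \<Rightarrow> bool" where
  "numerical_semigroup T \<longleftrightarrow> 0 \<in> T \<and> (\<forall>x\<in>T. \<forall>y\<in>T. x + y \<in> T) \<and> finite (- T)"

definition ultra_iso_to :: "nat set set \<Rightarrow> (nat \<Rightarrow> nat set) \<Rightarrow> nat set \<Rightarrow> bool" where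
  "ultra_iso_to U S T \<longleftrightarrow> (\<exists>\<phi> :: (nat \<Rightarrow> nat) \<Rightarrow> nat.
     \<phi> ` ultra_carrier S = T \<and>
     (\<forall>f\<in>ultra_carrier S. \<forall>g\<in>ultra_carrier S. \<phi> f = \<phi> g \<longleftrightarrow> U_ae U (\<lambda>i. f i = g i)) \<and>
     (\<forall>f\<in>ultra_carrier S. \<forall>g\<in>ultra_carrier S. \<phi> (\<lambda>i. f i + g i) = \<phi> f + \<phi> g) \<and>
     \<phi> (\<lambda>i. 0) = 0 \<and>
     (\<forall>f\<in>ultra_carrier S. \<forall>g\<in>ultra_carrier S. \<phi> f < \<phi> g \<longleftrightarrow> U_ae U (\<lambda>i. f i < g i)))"

definition limit_2_semigroup :: "nat set set \<Rightarrow> (nat \<Rightarrow> nat) \<Rightarrow> (nat \<Rightarrow> nat) \<Rightarrow> bool" where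
  "limit_2_semigroup U a b \<longleftrightarrow>
     \<not> (\<exists>T. numerical_semigroup T \<and> ultra_iso_to U (\<lambda>i. sgp2 (a i) (b i)) T)"

end

theory Submission
  imports Defs
begin

(* For each i choose a_i with u_i, v_i < a_i such that u_i v_i = 1 (mod a_i),
   u_i / a_i -> q1 and v_i / a_i -> q2, and put b_i = (i + 2) a_i + u_i.  Then
   b - alpha(b) = u and beta_1 = v b, so the two ratios are the limits of u_i / a_i and
   v_i / a_i along U, i.e. q1 and q2, because U contains the cofinite sets.  Since
   b_i -> oo, infinitely many distinct elements n a lie below a b, which is impossible in
   a submonoid of the naturals.  The pairs come from a polynomial identity: for
   D = 2N - k - j the numbers u = (kN + 1) N D - 1 and v = (jN - 1) N D - 1 are inverse
   modulo a = N^3 D, while u / a ~ k / N and v / a ~ j / N for any k < N and 0 < j <= N. *)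

lemma inverse_pair_identity:
  fixes N k j D :: "'a::comm_ring_1"
  assumes "D + k + j = 2 * N"
  shows "((k * N + 1) * N * D - 1) * ((j * N - 1) * N * D - 1)
           = 1 + N^3 * D * (k * j * N * D + (j - k) * D - 2)"
proof -
  have "((k * N + 1) * N * D - 1) * ((j * N - 1) * N * D - 1)
          = 1 + N^3 * D * (k * j * N * D + (j - k) * D - 2) + N^2 * D * (2 * N - (D + k + j))"
    by (simp add: algebra_simps power2_eq_square power3_eq_cube)
  then show ?thesis using assms by simp
qed

lemma inverse_pair_construction:
  fixes N k j :: nat
  assumes N: "2 \<le> N" and k: "k < N" and j: "0 < j" "j \<le> N"
  defines "D \<equiv> 2 * N - k - j"
  defines "a \<equiv> N^3 * D" and "u \<equiv> (k * N + 1) * N * D - 1" and "v \<equiv> (j * N - 1) * N * D - 1"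
  shows "N^2 \<le> a" and "u < a" and "v < a" and "(u * v) mod a = 1"
    and "real u / real a = (real k * N + 1) / N^2 - 1 / a"
    and "real v / real a = (real j * N - 1) / N^2 - 1 / a"
proof -
  have D: "0 < D" "D + k + j = 2 * N" using k j unfolding D_def by auto
  have "2 \<le> j * N" using N j mult_le_mono[of 1 j 2 N] by simp
  then have pos: "1 \<le> (k * N + 1) * N * D" "1 \<le> j * N" "1 \<le> (j * N - 1) * N * D"
    using N j D by (simp_all add: Suc_le_eq)
  then have u_int: "int u = (int k * int N + 1) * int N * int D - 1"
    and v_int: "int v = (int j * int N - 1) * int N * int D - 1"
    unfolding u_def v_def by (simp_all add: of_nat_diff distrib_left distrib_right)
  have "int D + int k + int j = 2 * int N" using D by linarith
  from inverse_pair_identity[OF this]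
  obtain w where "int u * int v = 1 + int a * w"
    unfolding u_int v_int a_def by (metis of_nat_mult of_nat_power)
  then have "int ((u * v) mod a) = 1 mod int a" by (simp add: of_nat_mod)
  moreover show "N^2 \<le> a" using N D unfolding a_def by (simp add: power2_eq_square power3_eq_cube)
  moreover have "4 \<le> N^2" using N power_mono[OF N, of 2] by simp
  ultimately show "(u * v) mod a = 1" by simp
  have "Suc k * N \<le> N * N" using k by (intro mult_le_mono1) simp
  moreover have "j * N \<le> N * N" using j by (intro mult_le_mono1) simp
  ultimately have "k * N + 1 \<le> N * N" "j * N - 1 \<le> N * N" using N by (simp_all only: mult_Suc)
  then have "(k * N + 1) * N * D \<le> a" and "(j * N - 1) * N * D \<le> a"
    unfolding a_def power3_eq_cube by (intro mult_le_mono1; simp)+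
  with pos show "u < a" "v < a" unfolding u_def v_def by linarith+
  have "real u = real_of_int (int u)" "real v = real_of_int (int v)" by simp_all
  then have ru: "real u = (real k * real N + 1) * real N * real D - 1"
    and rv: "real v = (real j * real N - 1) * real N * real D - 1"
    and ra: "real a = real N ^ 3 * real D"
    unfolding u_int v_int a_def by simp_all
  have "real N > 0" "real D > 0" using N D by simp_all
  then show "real u / real a = (real k * N + 1) / N^2 - 1 / a"
    and "real v / real a = (real j * N - 1) / N^2 - 1 / a"
    unfolding ru rv ra by (simp_all add: field_simps power2_eq_square power3_eq_cube)
qed

lemma exists_inverse_pair_near_fractions:
  fixes N k j :: nat
  assumes "2 \<le> N" "k < N" "0 < j" "j \<le> N"
  shows "\<exists>a u v. N^2 \<le> a \<and> u < a \<and> v < a \<and> (u * v) mod a = 1 \<and>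
           \<bar>real u / real a - real k / real N\<bar> \<le> 1 / real N \<and>
           \<bar>real v / real a - real j / real N\<bar> \<le> 1 / real N"
proof -
  obtain a u v where pair: "N^2 \<le> a" "u < a" "v < a" "(u * v) mod a = 1"
    and u: "real u / real a = (real k * N + 1) / N^2 - 1 / a"
    and v: "real v / real a = (real j * N - 1) / N^2 - 1 / a"
    using inverse_pair_construction[OF assms] by blast
  have "real N > 0" using assms by simp
  then have u_err: "real u / real a - real k / real N = 1 / real N^2 - 1 / real a"
    and v_err: "real v / real a - real j / real N = - 1 / real N^2 - 1 / real a"
    unfolding u v by (simp_all add: field_simps power2_eq_square)
  have "real N ^ 2 \<le> real a" using pair(1) by (metis of_nat_le_iff of_nat_power)
  moreover have "0 < real a" using pair(2) by simp
  ultimately have "1 / real a \<le> 1 / real N^2" "0 < 1 / real a"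
    using \<open>real N > 0\<close> by (simp_all add: frac_le)
  moreover have "2 * (1 / real N^2) \<le> 1 / real N" using assms by (simp add: field_simps power2_eq_square)
  ultimately have "\<bar>real u / real a - real k / real N\<bar> \<le> 1 / real N"
    and "\<bar>real v / real a - real j / real N\<bar> \<le> 1 / real N"
    unfolding u_err v_err abs_le_iff by linarith+
  with pair show ?thesis by blast
qed

lemma exists_nat_near_multiple:
  fixes q :: real and N :: nat
  assumes "0 \<le> q" "q \<le> 1" "0 < N"
  shows "\<exists>k<N. real k \<le> q * N \<and> q * N \<le> real k + 2"
proof (intro exI conjI)
  define k where "k = nat \<lfloor>q * real (N - 1)\<rfloor>"
  have "q * real (N - 1) \<le> real (N - 1)" using assms by (simp add: mult_left_le_one_le)
  moreover have "0 \<le> q * real (N - 1)" using assms by simp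
  moreover have "q * real (N - 1) = q * N - q" using assms by (simp add: of_nat_diff algebra_simps)
  ultimately have "real k \<le> q * N - q" "q * N - q < real k + 1" "real k \<le> real (N - 1)"
    unfolding k_def by linarith+
  then show "k < N" "real k \<le> q * N" "q * N \<le> real k + 2" using assms by (simp_all add: of_nat_diff)
qed

lemma exists_inverse_pair_near:
  fixes q1 q2 :: real and N :: nat
  assumes q1: "0 \<le> q1" "q1 \<le> 1" and q2: "0 \<le> q2" "q2 \<le> 1" and N: "2 \<le> N"
  shows "\<exists>a u v. N \<le> a \<and> u < a \<and> v < a \<and> (u * v) mod a = 1 \<and>
           \<bar>real u / real a - q1\<bar> \<le> 3 / real N \<and> \<bar>real v / real a - q2\<bar> \<le> 3 / real N"
proof -
  have frac: "\<bar>real m / real N - q\<bar> \<le> c / real N" if "\<bar>real m - q * N\<bar> \<le> c"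
    for m :: nat and q c :: real
  proof -
    have "real m / real N - q = (real m - q * N) / N" using N by (simp add: field_simps)
    with that N show ?thesis by (simp add: abs_divide divide_right_mono)
  qed
  obtain k where k: "k < N" "real k \<le> q1 * N" "q1 * N \<le> real k + 2"
    using exists_nat_near_multiple[OF q1, of N] N by auto
  obtain k' where k': "k' < N" "real k' \<le> q2 * N" "q2 * N \<le> real k' + 2"
    using exists_nat_near_multiple[OF q2, of N] N by auto
  obtain a u v where a: "N^2 \<le> a" "u < a" "v < a" "(u * v) mod a = 1"
    and u: "\<bar>real u / real a - real k / real N\<bar> \<le> 1 / real N"
    and v: "\<bar>real v / real a - real (Suc k') / real N\<bar> \<le> 1 / real N"
    using exists_inverse_pair_near_fractions[OF N k(1), of "Suc k'"] k'(1) by auto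
  have "\<bar>real k / real N - q1\<bar> \<le> 2 / real N" using k by (intro frac) (simp add: abs_le_iff)
  moreover have "\<bar>real (Suc k') / real N - q2\<bar> \<le> 1 / real N" using k' by (intro frac) (simp add: abs_le_iff)
  ultimately have "\<bar>real u / real a - q1\<bar> \<le> 3 / real N" "\<bar>real v / real a - q2\<bar> \<le> 3 / real N"
    using u v by (simp_all add: abs_le_iff)
  moreover have "N \<le> a" using a(1) by (metis le_trans power2_nat_le_imp_le)
  ultimately show ?thesis using a by blast
qed

lemma LIMSEQ_if_abs_diff_le:
  fixes X :: "nat \<Rightarrow> real"
  assumes "\<And>n. \<bar>X n - L\<bar> \<le> C / real (n + 2)"
  shows "X \<longlonglongrightarrow> L"
proof (rule LIM_zero_cancel, rule tendsto_0_le)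
  show "(\<lambda>n. C / real (n + 2)) \<longlonglongrightarrow> 0"
    using LIMSEQ_ignore_initial_segment[OF lim_const_over_n[of C], of 2] by simp
  show "eventually (\<lambda>n. norm (X n - L) \<le> norm (C / real (n + 2)) * 1) sequentially"
    using assms by (intro always_eventually allI) (metis abs_ge_self order_trans real_norm_def mult_1_right)
qed

lemma exists_inverse_pair_sequences:
  fixes q1 q2 :: real
  assumes "0 \<le> q1" "q1 \<le> 1" "0 \<le> q2" "q2 \<le> 1"
  shows "\<exists>a u v :: nat \<Rightarrow> nat.
           (\<forall>n. n + 2 \<le> a n \<and> u n < a n \<and> v n < a n \<and> (u n * v n) mod a n = 1) \<and>
           (\<lambda>n. real (u n) / real (a n)) \<longlonglongrightarrow> q1 \<and> (\<lambda>n. real (v n) / real (a n)) \<longlonglongrightarrow> q2"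
proof -
  have "\<forall>n. \<exists>a u v. n + 2 \<le> a \<and> u < a \<and> v < a \<and> (u * v) mod a = 1 \<and>
          \<bar>real u / real a - q1\<bar> \<le> 3 / real (n + 2) \<and> \<bar>real v / real a - q2\<bar> \<le> 3 / real (n + 2)"
    using exists_inverse_pair_near[OF assms, of "_ + 2"] by simp
  then obtain a u v :: "nat \<Rightarrow> nat" where near:
    "\<forall>n. n + 2 \<le> a n \<and> u n < a n \<and> v n < a n \<and> (u n * v n) mod a n = 1 \<and>
          \<bar>real (u n) / real (a n) - q1\<bar> \<le> 3 / real (n + 2) \<and> \<bar>real (v n) / real (a n) - q2\<bar> \<le> 3 / real (n + 2)"
    by metis
  moreover have "(\<lambda>n. real (u n) / real (a n)) \<longlonglongrightarrow> q1" "(\<lambda>n. real (v n) / real (a n)) \<longlonglongrightarrow> q2"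
    using near by (intro LIMSEQ_if_abs_diff_le[where C = 3]; blast)+
  ultimately show ?thesis by blast
qed

lemma minus_alpha_fn: "b - alpha_fn a b = b mod a"
  unfolding alpha_fn_def by (rule minus_div_mult_eq_mod)

lemma alpha_fn_le: "alpha_fn a b \<le> b"
  unfolding alpha_fn_def by simp

lemma beta1_fn_eq:
  assumes "1 < a" "v < a" "(v * b) mod a = 1"
  shows "beta1_fn a b = v * b"
proof -
  have "(LEAST k. k < a \<and> (k * b) mod a = 1 mod a) = v"
  proof (rule Least_equality)
    show "v < a \<and> (v * b) mod a = 1 mod a" using assms by simp
    fix k assume k: "k < a \<and> (k * b) mod a = 1 mod a"
    have "v = ((k * b) mod a * v) mod a" using k assms by simp
    also have "\<dots> = (k * ((v * b) mod a)) mod a" by (simp only: mod_mult_left_eq mod_mult_right_eq ac_simps)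
    also have "\<dots> = k" using k assms by simp
    finally show "v \<le> k" by simp
  qed
  then show ?thesis unfolding beta1_fn_def by simp
qed

lemma coprime_if_mult_mod_eq_one:
  fixes a b v :: nat
  assumes "(v * b) mod a = 1"
  shows "coprime a b"
proof (rule coprimeI)
  fix c assume "c dvd a" "c dvd b"
  then have "c dvd (v * b) mod a" by (simp add: dvd_mod)
  with assms show "is_unit c" by simp
qed

lemma generators_of_inverse_pair:
  fixes a u v N :: nat
  assumes u: "u < a" and v: "v < a" and uv: "(u * v) mod a = 1" and N: "2 \<le> N"
  defines "b \<equiv> N * a + u"
  shows "a < b" and "coprime a b" and "b - alpha_fn a b = u" and "beta1_fn a b = v * b"
proof -
  have "1 < a" using u uv by (cases "a = 1") auto
  have b_mod: "b mod a = u" unfolding b_def mod_mult_self3 using u by simp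
  then have vb: "(v * b) mod a = 1" using uv by (metis mod_mult_right_eq mult.commute)
  show "a < b" using \<open>1 < a\<close> mult_le_mono1[OF N, of a] unfolding b_def by linarith
  show "coprime a b" using vb by (rule coprime_if_mult_mod_eq_one)
  show "b - alpha_fn a b = u" by (simp add: minus_alpha_fn b_mod)
  show "beta1_fn a b = v * b" using \<open>1 < a\<close> v vb by (rule beta1_fn_eq)
qed

definition proper_filter :: "'a set set \<Rightarrow> bool" where
  "proper_filter F \<longleftrightarrow> UNIV \<in> F \<and> {} \<notin> F \<and>
     (\<forall>A B. A \<in> F \<and> B \<in> F \<longrightarrow> A \<inter> B \<in> F) \<and> (\<forall>A B. A \<in> F \<and> A \<subseteq> B \<longrightarrow> B \<in> F)"

lemma ultrafilter_on_nat_iff: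
  "ultrafilter_on_nat U \<longleftrightarrow> proper_filter U \<and> (\<forall>A. A \<in> U \<or> - A \<in> U)"
  unfolding ultrafilter_on_nat_def proper_filter_def by blast

lemma proper_filter_cofinite: "proper_filter {A :: nat set. finite (- A)}"
  unfolding proper_filter_def by (auto intro: finite_subset)

lemma proper_filter_Union_chain:
  assumes "C \<in> chains {F. proper_filter F}" "C \<noteq> {}"
  shows "proper_filter (\<Union>C)"
proof -
  have filters: "\<And>F. F \<in> C \<Longrightarrow> proper_filter F"
    and chain: "\<And>F G. F \<in> C \<Longrightarrow> G \<in> C \<Longrightarrow> F \<subseteq> G \<or> G \<subseteq> F"
    using assms(1) unfolding chains_def chain_subset_def by auto
  have Int_mem: "A \<inter> B \<in> \<Union>C" if AB: "A \<in> F" "B \<in> G" and FG: "F \<in> C" "G \<in> C" for A B F G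
  proof -
    obtain H where "H \<in> C" "A \<in> H" "B \<in> H" using chain[OF FG] AB FG by blast
    with filters[OF \<open>H \<in> C\<close>] show ?thesis unfolding proper_filter_def by blast
  qed
  show ?thesis
    unfolding proper_filter_def
  proof (intro conjI allI impI)
    show "UNIV \<in> \<Union>C" using assms(2) filters unfolding proper_filter_def by blast
    show "{} \<notin> \<Union>C" using filters unfolding proper_filter_def by blast
    show "A \<inter> B \<in> \<Union>C" if "A \<in> \<Union>C \<and> B \<in> \<Union>C" for A B
      using that Int_mem by blast
    show "B \<in> \<Union>C" if "A \<in> \<Union>C \<and> A \<subseteq> B" for A B
      using that filters unfolding proper_filter_def by blast
  qed
qed

lemma proper_filter_extend:
  assumes F: "proper_filter F" and A: "- A \<notin> F"
  shows "proper_filter {X. \<exists>Y\<in>F. A \<inter> Y \<subseteq> X}"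
  unfolding proper_filter_def
proof (intro conjI allI impI)
  show "UNIV \<in> {X. \<exists>Y\<in>F. A \<inter> Y \<subseteq> X}" using F unfolding proper_filter_def by blast
  show "{} \<notin> {X. \<exists>Y\<in>F. A \<inter> Y \<subseteq> X}"
  proof
    assume "{} \<in> {X. \<exists>Y\<in>F. A \<inter> Y \<subseteq> X}"
    then obtain Y where "Y \<in> F" "Y \<subseteq> - A" by blast
    with F A show False unfolding proper_filter_def by blast
  qed
  fix X1 X2
  show "X1 \<inter> X2 \<in> {X. \<exists>Y\<in>F. A \<inter> Y \<subseteq> X}"
    if "X1 \<in> {X. \<exists>Y\<in>F. A \<inter> Y \<subseteq> X} \<and> X2 \<in> {X. \<exists>Y\<in>F. A \<inter> Y \<subseteq> X}"
  proof -
    from that obtain Y1 Y2 where "Y1 \<in> F" "A \<inter> Y1 \<subseteq> X1" "Y2 \<in> F" "A \<inter> Y2 \<subseteq> X2" by blast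
    with F show ?thesis unfolding proper_filter_def by (intro CollectI bexI[of _ "Y1 \<inter> Y2"]) auto
  qed
  show "X2 \<in> {X. \<exists>Y\<in>F. A \<inter> Y \<subseteq> X}"
    if "X1 \<in> {X. \<exists>Y\<in>F. A \<inter> Y \<subseteq> X} \<and> X1 \<subseteq> X2"
    using that by blast
qed

lemma exists_ultrafilter_extending:
  assumes "proper_filter F"
  shows "\<exists>U. proper_filter U \<and> (\<forall>A. A \<in> U \<or> - A \<in> U) \<and> F \<subseteq> U"
proof -
  let ?P = "{G. proper_filter G \<and> F \<subseteq> G}"
  have "\<forall>C\<in>chains ?P. \<exists>G\<in>?P. \<forall>X\<in>C. X \<subseteq> G"
  proof
    fix C assume C: "C \<in> chains ?P"
    show "\<exists>G\<in>?P. \<forall>X\<in>C. X \<subseteq> G"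
    proof (cases "C = {}")
      case True
      with assms show ?thesis by blast
    next
      case False
      have "C \<in> chains {G. proper_filter G}" using C unfolding chains_def by blast
      with False C show ?thesis
        by (intro bexI[of _ "\<Union>C"]) (auto simp: proper_filter_Union_chain chains_def)
    qed
  qed
  from Zorn_Lemma2[OF this] obtain U where U: "U \<in> ?P" and maximal: "\<forall>G\<in>?P. U \<subseteq> G \<longrightarrow> G = U"
    by blast
  have "A \<in> U" if "- A \<notin> U" for A
  proof -
    let ?G = "{X. \<exists>Y\<in>U. A \<inter> Y \<subseteq> X}"
    have "?G \<in> ?P" "U \<subseteq> ?G" using U proper_filter_extend[OF _ that] by auto
    then have "?G = U" using maximal by blast
    moreover have "A \<in> ?G" using U unfolding proper_filter_def by blast
    ultimately show ?thesis by simp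
  qed
  with U show ?thesis by blast
qed

lemma exists_ultrafilter_cofinite:
  "\<exists>U. ultrafilter_on_nat U \<and> {A. finite (- A)} \<subseteq> U"
  using exists_ultrafilter_extending[OF proper_filter_cofinite] ultrafilter_on_nat_iff by blast

(* Meaningful only when U is closed under finite intersections and supersets;
   otherwise Abs_filter returns an unspecified filter. *)
definition filter_of :: "'a set set \<Rightarrow> 'a filter" where
  "filter_of U = Abs_filter (\<lambda>P. {i. P i} \<in> U)"

lemma eventually_filter_of:
  assumes "ultrafilter_on_nat U"
  shows "eventually P (filter_of U) \<longleftrightarrow> U_ae U P"
  unfolding filter_of_def U_ae_def
proof (rule eventually_Abs_filter, unfold_locales)
  show "{i. True} \<in> U" using assms unfolding ultrafilter_on_nat_def by simp
  show "{i. P i \<and> Q i} \<in> U" if "{i. P i} \<in> U" "{i. Q i} \<in> U" for P Q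
    using that assms unfolding ultrafilter_on_nat_def by (simp add: Collect_conj_eq)
  show "{i. Q i} \<in> U" if "\<forall>i. P i \<longrightarrow> Q i" "{i. P i} \<in> U" for P Q
    using that assms unfolding ultrafilter_on_nat_def by blast
qed

lemma filter_of_neq_bot:
  assumes "ultrafilter_on_nat U"
  shows "filter_of U \<noteq> bot"
  using assms unfolding trivial_limit_def eventually_filter_of[OF assms] U_ae_def ultrafilter_on_nat_def
  by simp

lemma filter_of_le_sequentially:
  assumes "ultrafilter_on_nat U" "{A. finite (- A)} \<subseteq> U"
  shows "filter_of U \<le> sequentially"
  unfolding le_filter_def eventually_filter_of[OF assms(1)] U_ae_def
    cofinite_eq_sequentially[symmetric] eventually_cofinite
  using assms(2) by (auto simp: Compl_eq)

lemma nonprincipal_if_cofinite: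
  assumes "ultrafilter_on_nat U" "{A. finite (- A)} \<subseteq> U"
  shows "nonprincipal U"
  unfolding nonprincipal_def
proof (intro allI notI)
  fix n assume "{n} \<in> U"
  then have "eventually (\<lambda>i. i = n) (filter_of U)"
    unfolding eventually_filter_of[OF assms(1)] U_ae_def by simp
  moreover have "eventually (\<lambda>i. i \<noteq> n) (filter_of U)"
    using filter_of_le_sequentially[OF assms] by (rule filter_leD) (rule eventually_sequentiallyI[of "Suc n"], simp)
  ultimately have "eventually (\<lambda>i. False) (filter_of U)" by (rule eventually_elim2) simp
  with filter_of_neq_bot[OF assms(1)] show False by simp
qed

lemma Sup_eq_if_nonneg_rationals_below:
  fixes S :: "real set"
  assumes "0 \<in> S" and le: "\<And>s. s \<in> S \<Longrightarrow> s \<le> L"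
    and rats: "\<And>t. t \<in> \<rat> \<Longrightarrow> 0 \<le> t \<Longrightarrow> t < L \<Longrightarrow> t \<in> S"
  shows "Sup S = L"
proof (rule cSup_eq_non_empty)
  show "S \<noteq> {}" using assms(1) by blast
  show "s \<le> L" if "s \<in> S" for s using le that .
  show "L \<le> y" if ub: "\<And>s. s \<in> S \<Longrightarrow> s \<le> y" for y
  proof (rule ccontr)
    assume "\<not> L \<le> y"
    then obtain t where "t \<in> \<rat>" "y < t" "t < L" using Rats_dense_in_real[of y L] by auto
    moreover have "0 \<le> y" using ub[OF assms(1)] .
    ultimately show False using ub[OF rats[of t]] by simp
  qed
qed

lemma Sup_fractions_eventually_le_eq_limit:
  fixes X :: "'a \<Rightarrow> real"
  assumes F: "F \<noteq> bot" and lim: "(X \<longlongrightarrow> L) F" and X: "\<And>i. 0 \<le> X i"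
  shows "Sup {real p / real q | p q. q \<noteq> 0 \<and> eventually (\<lambda>i. real p / real q \<le> X i) F} = L"
proof (rule Sup_eq_if_nonneg_rationals_below)
  show "0 \<in> {real p / real q | p q. q \<noteq> 0 \<and> eventually (\<lambda>i. real p / real q \<le> X i) F}"
    using X by (intro CollectI exI[of _ 0] exI[of _ 1]) simp
next
  fix s assume "s \<in> {real p / real q | p q. q \<noteq> 0 \<and> eventually (\<lambda>i. real p / real q \<le> X i) F}"
  then have "eventually (\<lambda>i. s \<le> X i) F" by blast
  with lim show "s \<le> L" using F by (rule tendsto_lowerbound)
next
  fix t :: real assume "t \<in> \<rat>" "0 \<le> t" "t < L"
  then obtain p q :: nat where "q \<noteq> 0" "t = real p / real q"
    by (metis Rats_abs_nat_div_natE abs_of_nonneg)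
  moreover have "eventually (\<lambda>i. t \<le> X i) F"
    using order_tendstoD(1)[OF lim \<open>t < L\<close>] by (rule eventually_mono) simp
  ultimately show "t \<in> {real p / real q | p q. q \<noteq> 0 \<and> eventually (\<lambda>i. real p / real q \<le> X i) F}"
    by blast
qed

lemma ultra_ratio_eq_Sup_eventually:
  assumes U: "ultrafilter_on_nat U" and x: "\<And>i. x' i \<le> x i" and y: "\<And>i. y' i < y i"
  shows "ultra_ratio U x x' y y' = Sup {real p / real q | p q. q \<noteq> 0 \<and>
           eventually (\<lambda>i. real p / real q \<le> real (x i - x' i) / real (y i - y' i)) (filter_of U)}"
proof -
  have cond: "(p * y i + q * x' i \<le> q * x i + p * y' i) \<longleftrightarrow>
      real p / real q \<le> real (x i - x' i) / real (y i - y' i)" if "q \<noteq> 0" for p q i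
  proof -
    have "(p * y i + q * x' i \<le> q * x i + p * y' i) \<longleftrightarrow> p * (y i - y' i) \<le> q * (x i - x' i)"
      using mult_le_mono2[OF x[of i], of q] mult_le_mono2[OF less_imp_le[OF y[of i]], of p]
      by (simp only: diff_mult_distrib2) arith
    also have "\<dots> \<longleftrightarrow> real p / real q \<le> real (x i - x' i) / real (y i - y' i)"
      using that y[of i]
      by (simp add: divide_simps of_nat_diff[symmetric] del: of_nat_diff) (metis of_nat_le_iff of_nat_mult mult.commute)
    finally show ?thesis .
  qed
  show ?thesis
    unfolding ultra_ratio_def eventually_filter_of[OF U]
    by (intro arg_cong[where f = Sup] Collect_cong ex_cong1 conj_cong refl) (simp_all add: cond)
qed

lemma ultra_ratio_eq_limit:
  assumes U: "ultrafilter_on_nat U" "{A. finite (- A)} \<subseteq> U"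
    and "\<And>i. x' i \<le> x i" "\<And>i. y' i < y i"
    and lim: "(\<lambda>i. real (x i - x' i) / real (y i - y' i)) \<longlonglongrightarrow> L"
  shows "ultra_ratio U x x' y y' = L"
  unfolding ultra_ratio_eq_Sup_eventually[OF U(1) assms(3,4)]
  using filter_of_neq_bot[OF U(1)] tendsto_mono[OF filter_of_le_sequentially[OF U] lim]
  by (rule Sup_fractions_eventually_le_eq_limit) simp

lemma sgp2_member: "x * a + y * b \<in> sgp2 a b"
  unfolding sgp2_def by blast

lemma limit_2_semigroup_if_unbounded:
  assumes U: "ultrafilter_on_nat U" "{A. finite (- A)} \<subseteq> U"
    and a: "\<And>i. 0 < a i" and b: "filterlim b at_top sequentially"
  shows "limit_2_semigroup U a b"
  unfolding limit_2_semigroup_def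
proof (intro notI, elim exE conjE)
  \<comment> \<open>The multiples n a are pairwise distinct and all lie below a b, so the isomorphism
     would inject the naturals into a finite initial segment.\<close>
  fix T assume "ultra_iso_to U (\<lambda>i. sgp2 (a i) (b i)) T"
  then obtain \<phi> :: "(nat \<Rightarrow> nat) \<Rightarrow> nat" where
    eq: "\<And>f g. f \<in> ultra_carrier (\<lambda>i. sgp2 (a i) (b i)) \<Longrightarrow> g \<in> ultra_carrier (\<lambda>i. sgp2 (a i) (b i)) \<Longrightarrow>
           \<phi> f = \<phi> g \<longleftrightarrow> U_ae U (\<lambda>i. f i = g i)" and
    less: "\<And>f g. f \<in> ultra_carrier (\<lambda>i. sgp2 (a i) (b i)) \<Longrightarrow> g \<in> ultra_carrier (\<lambda>i. sgp2 (a i) (b i)) \<Longrightarrow>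
           \<phi> f < \<phi> g \<longleftrightarrow> U_ae U (\<lambda>i. f i < g i)"
    unfolding ultra_iso_to_def by blast
  let ?F = "filter_of U"
  define multiple where "multiple n = (\<lambda>i. n * a i)" for n
  define ab where "ab = (\<lambda>i. a i * b i)"
  have carrier: "multiple n \<in> ultra_carrier (\<lambda>i. sgp2 (a i) (b i))"
    "ab \<in> ultra_carrier (\<lambda>i. sgp2 (a i) (b i))" for n
    using sgp2_member[of n _ 0] sgp2_member[of 0 _ "a _"]
    unfolding multiple_def ab_def ultra_carrier_def by simp_all
  have "inj (\<lambda>n. \<phi> (multiple n))"
  proof (rule injI)
    fix n n' assume "\<phi> (multiple n) = \<phi> (multiple n')"
    then have "eventually (\<lambda>i. n * a i = n' * a i) ?F"
      using eq[OF carrier(1) carrier(1)] unfolding eventually_filter_of[OF U(1)] multiple_def by simp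
    then have "eventually (\<lambda>i. n = n') ?F" by (rule eventually_mono) (metis a mult_right_cancel not_gr0)
    with filter_of_neq_bot[OF U(1)] show "n = n'" by simp
  qed
  moreover have "\<phi> (multiple n) < \<phi> ab" for n
  proof -
    have "eventually (\<lambda>i. Suc n \<le> b i) sequentially" using b by (simp add: filterlim_at_top)
    then have "eventually (\<lambda>i. n * a i < a i * b i) ?F"
      by (rule filter_leD[OF filter_of_le_sequentially[OF U], OF eventually_mono]) (simp add: a)
    then show ?thesis
      using less[OF carrier] unfolding eventually_filter_of[OF U(1)] multiple_def ab_def by simp
  qed
  then have "range (\<lambda>n. \<phi> (multiple n)) \<subseteq> {..<\<phi> ab}" by auto
  then have "finite (range (\<lambda>n. \<phi> (multiple n)))" by (rule finite_subset) simp
  ultimately show False using finite_imageD infinite_UNIV_nat by blast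
qed

lemma exists_generator_sequences:
  fixes q1 q2 :: real
  assumes "0 \<le> q1" "q1 \<le> 1" "0 \<le> q2" "q2 \<le> 1"
  shows "\<exists>a b :: nat \<Rightarrow> nat.
           (\<forall>i. 2 \<le> a i \<and> a i < b i \<and> coprime (a i) (b i)) \<and> filterlim b at_top sequentially \<and>
           (\<lambda>i. real (b i - alpha_fn (a i) (b i)) / real (a i)) \<longlonglongrightarrow> q1 \<and>
           (\<lambda>i. real (beta1_fn (a i) (b i)) / real (a i * b i)) \<longlonglongrightarrow> q2"
proof -
  obtain a u v :: "nat \<Rightarrow> nat" where
    pair: "\<And>i. i + 2 \<le> a i \<and> u i < a i \<and> v i < a i \<and> (u i * v i) mod a i = 1"
    and lim_u: "(\<lambda>i. real (u i) / real (a i)) \<longlonglongrightarrow> q1"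
    and lim_v: "(\<lambda>i. real (v i) / real (a i)) \<longlonglongrightarrow> q2"
    using exists_inverse_pair_sequences[OF assms] by blast
  define b where "b i = (i + 2) * a i + u i" for i
  have gen: "a i < b i \<and> coprime (a i) (b i) \<and> b i - alpha_fn (a i) (b i) = u i \<and>
      beta1_fn (a i) (b i) = v i * b i" for i
    using generators_of_inverse_pair[of "u i" "a i" "v i" "i + 2"] pair[of i] unfolding b_def by simp
  have a2: "2 \<le> a i" and b_gt: "i < b i" for i using pair[of i] gen[of i] by linarith+
  then have "filterlim b at_top sequentially"
    by (intro filterlim_at_top_mono[OF filterlim_ident] always_eventually) (simp add: less_imp_le)
  moreover have "(\<lambda>i. real (b i - alpha_fn (a i) (b i)) / real (a i)) \<longlonglongrightarrow> q1"
    using lim_u gen by simp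
  moreover have "(\<lambda>i. real (beta1_fn (a i) (b i)) / real (a i * b i)) \<longlonglongrightarrow> q2"
    using lim_v gen b_gt[THEN gr_implies_not0] by simp
  ultimately show ?thesis using a2 gen by blast
qed

theorem proposition2p8:
  fixes q1 q2 :: real
  assumes "0 \<le> q1" "q1 \<le> 1" "0 \<le> q2" "q2 \<le> 1"
  shows "\<exists>U (a :: nat \<Rightarrow> nat) (b :: nat \<Rightarrow> nat).
           ultrafilter_on_nat U \<and> nonprincipal U \<and>
           (\<forall>i. 2 \<le> a i \<and> a i < b i \<and> coprime (a i) (b i)) \<and>
           limit_2_semigroup U a b \<and>
           ultra_ratio U b (\<lambda>i. alpha_fn (a i) (b i)) a (\<lambda>i. 0) = q1 \<and>
           ultra_ratio U (\<lambda>i. beta1_fn (a i) (b i)) (\<lambda>i. 0) (\<lambda>i. a i * b i) (\<lambda>i. 0) = q2"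
proof -
  obtain U where U: "ultrafilter_on_nat U" "{A. finite (- A)} \<subseteq> U"
    using exists_ultrafilter_cofinite by blast
  obtain a b :: "nat \<Rightarrow> nat" where gen: "\<And>i. 2 \<le> a i \<and> a i < b i \<and> coprime (a i) (b i)"
    and b: "filterlim b at_top sequentially"
    and lim_alpha: "(\<lambda>i. real (b i - alpha_fn (a i) (b i)) / real (a i)) \<longlonglongrightarrow> q1"
    and lim_beta1: "(\<lambda>i. real (beta1_fn (a i) (b i)) / real (a i * b i)) \<longlonglongrightarrow> q2"
    using exists_generator_sequences[OF assms] by blast
  have a_pos: "0 < a i" and "0 < b i" for i using gen[of i] by simp_all
  have "limit_2_semigroup U a b"
    using U a_pos b by (rule limit_2_semigroup_if_unbounded)
  moreover have "ultra_ratio U b (\<lambda>i. alpha_fn (a i) (b i)) a (\<lambda>i. 0) = q1"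
    using U a_pos alpha_fn_le lim_alpha by (intro ultra_ratio_eq_limit) auto
  moreover have "ultra_ratio U (\<lambda>i. beta1_fn (a i) (b i)) (\<lambda>i. 0) (\<lambda>i. a i * b i) (\<lambda>i. 0) = q2"
    using U a_pos \<open>\<And>i. 0 < b i\<close> lim_beta1 by (intro ultra_ratio_eq_limit) auto
  ultimately show ?thesis using U gen nonprincipal_if_cofinite by blast
qed

end
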